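(* Let $n$ and $0<n_1<\cdots<n_d<n$ be integers with $m_1=n_1$, $m_k=n_k-n_{k-1}$ ($2\le k\le d$), $m_{d+1}=n-n_d$, and regard $\mathrm{Flag}(n_1,\dots,n_d;n)=\{(VJ_1V^{\mathsf T},\dots,VJ_dV^{\mathsf T}):V\in\mathrm{O}(n)\}\subseteq(\mathbb{R}^{n\times n})^d$. Let $\mathfrak f=V(J_1,\dots,J_d)V^{\mathsf T}$. Then \[ \mathbb{T}_{\mathfrak f}\mathrm{Flag}(n_1,\dots,n_d;n)=\{V(AJ_1-J_1A,\dots,AJ_d-J_dA)V^{\mathsf T}: A\in\mathfrak{so}(n),\ A(p,p)=0 \text{ for } p=1,\dots,d+1\}. \] Equivalently, $\mathbb{T}_{\mathfrak f}\mathrm{Flag}(n_1,\dots,n_d;n)$ consists of the tuples $V(X_1,\dots,X_d)V^{\mathsf T}$ with $X_1,\dots,X_d$ symmetric $n\times n$ matrices satisfying \[ X_k(k,l)=-X_l(k,l),\quad X_k(p,q)=0,\quad X_k(k,k)=0 \] for all $1\le k,l\le d$ and $1\le p,q\le d+1$ with $p,q,l\neq k$.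
   Context: $J_k=\operatorname{diag}(-I_{m_1},\dots,-I_{m_{k-1}},I_{m_k},-I_{m_{k+1}},\dots,-I_{m_{d+1}})$. $V(X_1,\dots,X_d)V^{\mathsf T}$ denotes $(VX_1V^{\mathsf T},\dots,VX_dV^{\mathsf T})$. For an $n\times n$ matrix $M$, $M(p,q)\in\mathbb{R}^{m_p\times m_q}$ denotes its $(p,q)$ block in the partition $n=m_1+\cdots+m_{d+1}$. $\mathfrak{so}(n)$ is the space of real skew-symmetric $n\times n$ matrices. *)

theory Defs
  imports "HOL-Analysis.Analysis"
begin

text \<open>Indices of n x n matrices are the elements of a finite linearly ordered type 'n
  with CARD('n) = n; the position (0-based) of an index i is the number of indices below it.\<close>
definition posn :: "'n::{finite,linorder} \<Rightarrow> nat" where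
  "posn i = card {j. j < i}"

text \<open>Block index (1-based) of an index i for the partition given by
  ns 0 = 0 < ns 1 < ... < ns d < ns (d+1) = n: the p with ns (p-1) <= posn i < ns p.\<close>
definition blk :: "(nat \<Rightarrow> nat) \<Rightarrow> 'n::{finite,linorder} \<Rightarrow> nat" where
  "blk ns i = (LEAST p. posn i < ns p)"

definition Jmat :: "(nat \<Rightarrow> nat) \<Rightarrow> nat \<Rightarrow> real^('n::{finite,linorder})^('n::{finite,linorder})" where
  "Jmat ns k = (\<chi> i j. if i = j then (if blk ns i = k then 1 else -1) else 0)"

definition Flag :: "(nat \<Rightarrow> nat) \<Rightarrow> nat \<Rightarrow> (nat \<Rightarrow> real^('n::{finite,linorder})^('n::{finite,linorder})) set" where
  "Flag ns d = {F. \<exists>V. orthogonal_matrix V \<and>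
      (\<forall>k\<in>{1..d}. F k = V ** Jmat ns k ** transpose V) \<and> (\<forall>k. k \<notin> {1..d} \<longrightarrow> F k = 0)}"

definition tangent_space ::
  "('i \<Rightarrow> 'a::real_normed_vector) set \<Rightarrow> ('i \<Rightarrow> 'a) \<Rightarrow> ('i \<Rightarrow> 'a) set" where
  "tangent_space S x = {v. \<exists>\<gamma> e. e > 0 \<and> \<gamma> 0 = x \<and> (\<forall>t. \<bar>t\<bar> < e \<longrightarrow> \<gamma> t \<in> S) \<and>
      (\<forall>k. ((\<lambda>t. \<gamma> t k) has_vector_derivative v k) (at 0))}"

end

theory Submission
  imports Defs
begin

(* Conjugating by V W(t), where W is a curve of orthogonal matrices with W(0) = I and
   W'(0) = A, produces the tangent vector V (A J_k - J_k A) V^T.  Every skew-symmetric A is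
   such a velocity: it is a combination of elementary skew matrices, each the velocity of a
   plane rotation, and velocities add under pointwise products of curves and scale under
   reparametrisation.
   Conversely, differentiating the relations F_k^T = F_k, F_k^2 = I and F_k F_l = F_l F_k,
   which hold along any curve in the flag manifold, shows that X_k = V^T F_k' V satisfies the
   block conditions.  Since the (i,j) entry of A J_k - J_k A is A(i,j) (J_k(j,j) - J_k(i,i)),
   these conditions determine a skew, block-off-diagonal A with X_k = A J_k - J_k A. *)

lemma matrix_add_rdistrib: "(B + C) ** A = B ** A + C ** (A::'a::semiring_1^'p^'n)"
  by (vector matrix_matrix_mult_def sum.distrib[symmetric] field_simps)

lemma bounded_bilinear_matrix_matrix_mult:
  "bounded_bilinear ((**) :: real^'n^'m \<Rightarrow> real^'p^'n \<Rightarrow> real^'p^'m)"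
proof -
  have "bilinear ((**) :: real^'n^'m \<Rightarrow> real^'p^'n \<Rightarrow> real^'p^'m)"
    unfolding bilinear_def
    by (auto intro!: linearI simp: matrix_add_ldistrib matrix_add_rdistrib matrix_scalar_ac
        scalar_matrix_assoc[symmetric])
  then show ?thesis
    by (rule bilinear_conv_bounded_bilinear[THEN iffD1])
qed

lemmas matrix_diff_ldistrib = bounded_bilinear.diff_right[OF bounded_bilinear_matrix_matrix_mult]
lemmas matrix_diff_rdistrib = bounded_bilinear.diff_left[OF bounded_bilinear_matrix_matrix_mult]
lemmas matrix_minus_left = bounded_bilinear.minus_left[OF bounded_bilinear_matrix_matrix_mult]
lemmas matrix_minus_right = bounded_bilinear.minus_right[OF bounded_bilinear_matrix_matrix_mult]

lemma bounded_linear_transpose: "bounded_linear (transpose :: real^'n^'m \<Rightarrow> real^'m^'n)"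
  by (auto intro!: linearI simp: transpose_def vec_eq_iff simp flip: linear_conv_bounded_linear)

lemma has_vector_derivative_matrix_mult:
  fixes f :: "real \<Rightarrow> real^'n^'m" and g :: "real \<Rightarrow> real^'p^'n"
  assumes "(f has_vector_derivative f') (at x)" "(g has_vector_derivative g') (at x)"
  shows "((\<lambda>t. f t ** g t) has_vector_derivative f x ** g' + f' ** g x) (at x)"
  using bounded_bilinear.has_vector_derivative[OF bounded_bilinear_matrix_matrix_mult assms] .

lemma has_vector_derivative_transpose:
  fixes f :: "real \<Rightarrow> real^'n^'m"
  assumes "(f has_vector_derivative f') (at x)"
  shows "((\<lambda>t. transpose (f t)) has_vector_derivative transpose f') (at x)"
  using bounded_linear.has_vector_derivative[OF bounded_linear_transpose assms] .

lemma has_vector_derivative_locally_constant: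
  assumes "(g has_vector_derivative g') (at 0)" "e > 0" "\<forall>t. \<bar>t\<bar> < e \<longrightarrow> g t = c"
  shows "g' = 0"
proof -
  have "(g has_vector_derivative 0) (at 0)"
    by (rule has_vector_derivative_transform_within_open[OF has_vector_derivative_const,
          where S = "{-e<..<e}"]) (use assms in auto)
  then show ?thesis
    using assms(1) vector_derivative_unique_at by blast
qed

lemma orthogonal_conj_mult:
  assumes "orthogonal_matrix V"
  shows "(V ** A ** transpose V) ** (V ** B ** transpose V) = V ** (A ** B) ** transpose V"
  using assms unfolding orthogonal_matrix_def by (metis matrix_mul_assoc matrix_mul_lid)

lemma orthogonal_conj_cancel:
  assumes "orthogonal_matrix V"
  shows "transpose V ** (V ** A ** transpose V) ** V = A"
    and "V ** (transpose V ** A ** V) ** transpose V = A"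
  using assms unfolding orthogonal_matrix_def by (metis matrix_mul_assoc matrix_mul_lid matrix_mul_rid)+

lemma orthogonal_conj_eq_iff:
  assumes "orthogonal_matrix V"
  shows "V ** A ** transpose V = V ** B ** transpose V \<longleftrightarrow> A = B"
  using orthogonal_conj_cancel(1)[OF assms] by metis

definition orthogonal_velocity :: "real^'n^'n \<Rightarrow> bool" where
  "orthogonal_velocity A \<longleftrightarrow>
     (\<exists>W. (\<forall>t. orthogonal_matrix (W t)) \<and> W 0 = mat 1 \<and> (W has_vector_derivative A) (at 0))"

lemma orthogonal_velocity_0: "orthogonal_velocity 0"
  unfolding orthogonal_velocity_def
  by (rule exI[of _ "\<lambda>t. mat 1"]) (auto intro: orthogonal_matrix_id has_vector_derivative_const)

lemma orthogonal_velocity_add: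
  assumes "orthogonal_velocity A" "orthogonal_velocity B"
  shows "orthogonal_velocity (A + B)"
proof -
  obtain W1 where W1: "\<forall>t. orthogonal_matrix (W1 t)" "W1 0 = mat 1" "(W1 has_vector_derivative A) (at 0)"
    using assms(1) orthogonal_velocity_def by blast
  obtain W2 where W2: "\<forall>t. orthogonal_matrix (W2 t)" "W2 0 = mat 1" "(W2 has_vector_derivative B) (at 0)"
    using assms(2) orthogonal_velocity_def by blast
  have "((\<lambda>t. W1 t ** W2 t) has_vector_derivative A + B) (at 0)"
    using has_vector_derivative_matrix_mult[OF W1(3) W2(3)] W1(2) W2(2) by (simp add: add.commute)
  then show ?thesis
    unfolding orthogonal_velocity_def using W1 W2 orthogonal_matrix_mul
    by (intro exI[of _ "\<lambda>t. W1 t ** W2 t"]) auto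
qed

lemma orthogonal_velocity_sum:
  "finite S \<Longrightarrow> (\<And>x. x \<in> S \<Longrightarrow> orthogonal_velocity (f x)) \<Longrightarrow> orthogonal_velocity (sum f S)"
  by (induction S rule: finite_induct) (auto intro: orthogonal_velocity_0 orthogonal_velocity_add)

lemma orthogonal_velocity_scaleR:
  assumes "orthogonal_velocity A"
  shows "orthogonal_velocity (a *\<^sub>R A)"
proof -
  obtain W where W: "\<forall>t. orthogonal_matrix (W t)" "W 0 = mat 1" "(W has_vector_derivative A) (at 0)"
    using assms orthogonal_velocity_def by blast
  have "((\<lambda>t. a * t) has_vector_derivative a) (at 0)"
    by (auto intro!: derivative_eq_intros simp flip: has_real_derivative_iff_has_vector_derivative)
  from vector_diff_chain_at[OF this] have "((\<lambda>t. W (a * t)) has_vector_derivative a *\<^sub>R A) (at 0)"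
    using W(3) by (simp add: o_def)
  then show ?thesis
    unfolding orthogonal_velocity_def using W(1,2) by (intro exI[of _ "\<lambda>t. W (a * t)"]) auto
qed

definition matrix_unit :: "'n \<Rightarrow> 'n \<Rightarrow> real^'n^'n" where
  "matrix_unit i j = (\<chi> r c. if r = i \<and> c = j then 1 else 0)"

definition elementary_skew :: "'n \<Rightarrow> 'n \<Rightarrow> real^'n^'n" where
  "elementary_skew i j = matrix_unit i j - matrix_unit j i"

definition givens_rotation :: "'n \<Rightarrow> 'n \<Rightarrow> real \<Rightarrow> real^'n^'n" where
  "givens_rotation i j t =
     mat 1 + (cos t - 1) *\<^sub>R (matrix_unit i i + matrix_unit j j) + sin t *\<^sub>R elementary_skew i j"

lemma givens_rotation_nth:
  "i \<noteq> j \<Longrightarrow> givens_rotation i j t $ r $ c =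
     (if r = c then (if r = i \<or> r = j then cos t else 1)
      else if r = i \<and> c = j then sin t else if r = j \<and> c = i then - sin t else 0)"
  by (auto simp: givens_rotation_def elementary_skew_def matrix_unit_def mat_def)

lemma orthogonal_matrix_givens_rotation:
  assumes "i \<noteq> j"
  shows "orthogonal_matrix (givens_rotation i j t)"
proof -
  let ?G = "givens_rotation i j t"
  have "(transpose ?G ** ?G) $ r $ c = mat 1 $ r $ c" for r c
  proof -
    have "(transpose ?G ** ?G) $ r $ c = (\<Sum>m\<in>UNIV. ?G $ m $ r * ?G $ m $ c)"
      by (simp add: matrix_matrix_mult_def transpose_def)
    also have "\<dots> = (\<Sum>m\<in>{i, j, r, c}. ?G $ m $ r * ?G $ m $ c)"
      using assms by (intro sum.mono_neutral_right) (auto simp: givens_rotation_nth)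
    also have "\<dots> = mat 1 $ r $ c"
      using assms sin_cos_squared_add[of t]
      by (cases "r = i"; cases "r = j"; cases "c = i"; cases "c = j"; cases "r = c")
         (auto simp: givens_rotation_nth mat_def power2_eq_square insert_commute)
    finally show ?thesis .
  qed
  then show ?thesis
    by (simp add: orthogonal_matrix vec_eq_iff)
qed

lemma orthogonal_velocity_elementary_skew: "orthogonal_velocity (elementary_skew i j)"
proof (cases "i = j")
  case True
  then show ?thesis
    using orthogonal_velocity_0 by (simp add: elementary_skew_def)
next
  case False
  have "(givens_rotation i j has_vector_derivative elementary_skew i j) (at 0)"
    unfolding givens_rotation_def
    by (auto intro!: derivative_eq_intros)
  then show ?thesis
    unfolding orthogonal_velocity_def using orthogonal_matrix_givens_rotation[OF False]
    by (intro exI[of _ "givens_rotation i j"]) (auto simp: givens_rotation_def)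
qed

lemma sum_matrix_unit_nth:
  "(\<Sum>i\<in>UNIV. \<Sum>j\<in>UNIV. x i j *\<^sub>R matrix_unit i j) $ r $ c = x r c"
proof -
  have "(\<Sum>j\<in>UNIV. x i j * (if r = i \<and> c = j then 1 else 0)) = (if r = i then x i c else 0)" for i
    by (cases "r = i") (simp_all add: if_distrib[of "(*) _"] sum.delta cong: if_cong)
  then show ?thesis
    by (simp add: matrix_unit_def)
qed

lemma skew_eq_sum_elementary_skew:
  assumes "transpose A = - A"
  shows "A = (\<Sum>i\<in>UNIV. \<Sum>j\<in>UNIV. (A $ i $ j / 2) *\<^sub>R elementary_skew i j)"
proof -
  have skew: "A $ c $ r = - A $ r $ c" for r c
    using arg_cong[OF assms, of "\<lambda>M. M $ r $ c"] by (simp add: transpose_def)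
  have sum:  "(\<Sum>i\<in>UNIV. \<Sum>j\<in>UNIV. (A $ i $ j / 2) *\<^sub>R elementary_skew i j) =
      (\<Sum>i\<in>UNIV. \<Sum>j\<in>UNIV. (A $ i $ j / 2) *\<^sub>R matrix_unit i j)
      - (\<Sum>i\<in>UNIV. \<Sum>j\<in>UNIV. (A $ j $ i / 2) *\<^sub>R matrix_unit i j)"
    by (simp add: elementary_skew_def scaleR_diff_right sum_subtractf)
       (subst (2) sum.swap, simp)
  have "(\<Sum>i\<in>UNIV. \<Sum>j\<in>UNIV. (A $ i $ j / 2) *\<^sub>R elementary_skew i j) $ r $ c = A $ r $ c" for r c
    unfolding sum using skew[of c r] by (simp only: vector_minus_component sum_matrix_unit_nth)
  then show ?thesis
    by (simp add: vec_eq_iff)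
qed

lemma skew_imp_orthogonal_velocity: "transpose A = - A \<Longrightarrow> orthogonal_velocity A"
  by (subst skew_eq_sum_elementary_skew)
     (auto intro!: orthogonal_velocity_sum orthogonal_velocity_scaleR orthogonal_velocity_elementary_skew)

definition Jsign :: "(nat \<Rightarrow> nat) \<Rightarrow> nat \<Rightarrow> 'n::{finite,linorder} \<Rightarrow> real" where
  "Jsign ns k i = (if blk ns i = k then 1 else -1)"

lemma Jmat_nth: "Jmat ns k $ i $ j = (if i = j then Jsign ns k i else 0)"
  by (simp add: Jmat_def Jsign_def)

lemma Jmat_mult_nth: "(Jmat ns k ** M) $ i $ j = Jsign ns k i * M $ i $ j"
  by (simp add: matrix_matrix_mult_def Jmat_nth if_distrib if_distribR sum.delta cong: if_cong)

lemma mult_Jmat_nth: "(M ** Jmat ns k) $ i $ j = M $ i $ j * Jsign ns k j"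
  by (simp add: matrix_matrix_mult_def Jmat_nth if_distrib if_distribR sum.delta' cong: if_cong)

lemma transpose_Jmat: "transpose (Jmat ns k) = Jmat ns k"
  by (simp add: vec_eq_iff transpose_def Jmat_nth)

lemma Jmat_mult_self: "Jmat ns k ** Jmat ns k = mat 1"
  by (simp add: vec_eq_iff Jmat_mult_nth Jmat_nth mat_def Jsign_def)

lemma Jmat_mult_commute: "Jmat ns k ** Jmat ns l = Jmat ns l ** Jmat ns k"
  by (simp add: vec_eq_iff Jmat_mult_nth Jmat_nth)

lemma blk_bounds:
  assumes "ns 0 = 0" "ns (d + 1) = CARD('n)"
  shows "1 \<le> blk ns (i::'n::{finite,linorder}) \<and> blk ns i \<le> d + 1"
proof -
  have "{j. j < i} \<subset> UNIV" by auto
  then have "posn i < ns (d + 1)"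
    unfolding posn_def using assms(2) by (simp add: psubset_card_mono)
  then have "blk ns i \<le> d + 1" "posn i < ns (blk ns i)"
    unfolding blk_def by (auto intro: Least_le LeastI)
  then show ?thesis
    using assms(1) by (cases "blk ns i") auto
qed

lemma Flag_relations:
  assumes "F \<in> Flag ns d" "k \<in> {1..d}" "l \<in> {1..d}"
  shows "transpose (F k) = F k" "F k ** F k = mat 1" "F k ** F l = F l ** F k"
proof -
  obtain W where W: "orthogonal_matrix W" "\<forall>k\<in>{1..d}. F k = W ** Jmat ns k ** transpose W"
    using assms(1) unfolding Flag_def by blast
  show "transpose (F k) = F k"
    using W(2) assms(2) by (simp add: matrix_transpose_mul matrix_mul_assoc transpose_Jmat)
  show "F k ** F k = mat 1"
    using W assms(2) by (simp add: orthogonal_conj_mult Jmat_mult_self orthogonal_matrix_def)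
  show "F k ** F l = F l ** F k"
    using W assms(2,3) by (simp add: orthogonal_conj_mult Jmat_mult_commute)
qed

lemma Flag_outside: "F \<in> Flag ns d \<Longrightarrow> k \<notin> {1..d} \<Longrightarrow> F k = 0"
  unfolding Flag_def by blast

definition flag_tangent_commutators ::
  "(nat \<Rightarrow> nat) \<Rightarrow> nat \<Rightarrow> real^('n::{finite,linorder})^('n::{finite,linorder}) \<Rightarrow>
     (nat \<Rightarrow> real^('n::{finite,linorder})^('n::{finite,linorder})) set"
  where "flag_tangent_commutators ns d V =
    {F. \<exists>A::real^('n::{finite,linorder})^('n::{finite,linorder}). transpose A = - A \<and>
          (\<forall>i j. blk ns i = blk ns j \<longrightarrow> A $ i $ j = 0) \<and>
          (\<forall>k\<in>{1..d}. F k = V ** (A ** Jmat ns k - Jmat ns k ** A) ** transpose V) \<and>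
          (\<forall>k. k \<notin> {1..d} \<longrightarrow> F k = 0)}"

definition flag_tangent_blocks ::
  "(nat \<Rightarrow> nat) \<Rightarrow> nat \<Rightarrow> real^('n::{finite,linorder})^('n::{finite,linorder}) \<Rightarrow>
     (nat \<Rightarrow> real^('n::{finite,linorder})^('n::{finite,linorder})) set"
  where "flag_tangent_blocks ns d V =
    {F. \<exists>X::nat \<Rightarrow> real^('n::{finite,linorder})^('n::{finite,linorder}).
          (\<forall>k\<in>{1..d}. transpose (X k) = X k \<and> F k = V ** X k ** transpose V) \<and>
          (\<forall>k\<in>{1..d}. \<forall>l\<in>{1..d}. l \<noteq> k \<longrightarrow>
              (\<forall>i j. blk ns i = k \<and> blk ns j = l \<longrightarrow> X k $ i $ j = - (X l $ i $ j))) \<and>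
          (\<forall>k\<in>{1..d}. \<forall>i j. blk ns i \<noteq> k \<and> blk ns j \<noteq> k \<longrightarrow> X k $ i $ j = 0) \<and>
          (\<forall>k\<in>{1..d}. \<forall>i j. blk ns i = k \<and> blk ns j = k \<longrightarrow> X k $ i $ j = 0) \<and>
          (\<forall>k. k \<notin> {1..d} \<longrightarrow> F k = 0)}"

lemma has_vector_derivative_orthogonal_conj:
  fixes W :: "real \<Rightarrow> real^'n^'n"
  assumes "(W has_vector_derivative A) (at 0)" "W 0 = mat 1" "transpose A = - A"
  shows "((\<lambda>t. (U ** W t) ** M ** transpose (U ** W t)) has_vector_derivative
            U ** (A ** M - M ** A) ** transpose U) (at 0)"
proof -
  have UW: "((\<lambda>t. U ** W t) has_vector_derivative U ** A) (at 0)"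
    using has_vector_derivative_matrix_mult[OF has_vector_derivative_const assms(1), of U] by simp
  have "((\<lambda>t. (U ** W t) ** M ** transpose (U ** W t)) has_vector_derivative
      U ** W 0 ** M ** transpose (U ** A) + U ** A ** M ** transpose (U ** W 0)) (at 0)"
    using has_vector_derivative_matrix_mult[OF
        has_vector_derivative_matrix_mult[OF UW has_vector_derivative_const]
        has_vector_derivative_transpose[OF UW]]
    by simp
  moreover have "U ** W 0 ** M ** transpose (U ** A) + U ** A ** M ** transpose (U ** W 0) =
      U ** (A ** M - M ** A) ** transpose U"
    using assms(2,3) by (simp add: matrix_transpose_mul matrix_mul_assoc matrix_minus_left matrix_minus_right
        matrix_diff_ldistrib matrix_diff_rdistrib matrix_add_rdistrib)
  ultimately show ?thesis by simp
qed

lemma flag_tangent_commutators_subset_tangent_space: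
  assumes V: "orthogonal_matrix V"
    and f: "\<forall>k\<in>{1..d}. f k = V ** Jmat ns k ** transpose V" "\<forall>k. k \<notin> {1..d} \<longrightarrow> f k = 0"
  shows "flag_tangent_commutators ns d V \<subseteq> tangent_space (Flag ns d) f"
proof
  fix F assume "F \<in> flag_tangent_commutators ns d V"
  then obtain A where A: "transpose A = - A"
    and F: "\<forall>k\<in>{1..d}. F k = V ** (A ** Jmat ns k - Jmat ns k ** A) ** transpose V"
           "\<forall>k. k \<notin> {1..d} \<longrightarrow> F k = 0"
    unfolding flag_tangent_commutators_def by blast
  obtain W where W: "\<forall>t. orthogonal_matrix (W t)" "W 0 = mat 1" "(W has_vector_derivative A) (at 0)"
    using skew_imp_orthogonal_velocity[OF A] orthogonal_velocity_def by blast
  define \<gamma> where "\<gamma> t k = (if k \<in> {1..d} then (V ** W t) ** Jmat ns k ** transpose (V ** W t) else 0)"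
    for t k
  have "\<gamma> t \<in> Flag ns d" for t
    unfolding Flag_def \<gamma>_def using orthogonal_matrix_mul[OF V W(1)[rule_format, of t]]
    by (intro CollectI exI[of _ "V ** W t"]) auto
  moreover have "\<gamma> 0 = f"
    using f W(2) by (auto simp: \<gamma>_def)
  moreover have "((\<lambda>t. \<gamma> t k) has_vector_derivative F k) (at 0)" for k
  proof (cases "k \<in> {1..d}")
    case True
    then show ?thesis
      using has_vector_derivative_orthogonal_conj[OF W(3,2) A] F(1) by (simp add: \<gamma>_def)
  next
    case False
    then show ?thesis
      unfolding \<gamma>_def if_not_P[OF False] using F(2) by (simp add: has_vector_derivative_const)
  qed
  ultimately show "F \<in> tangent_space (Flag ns d) f"
    unfolding tangent_space_def by (intro CollectI exI[of _ \<gamma>] exI[of _ 1]) auto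
qed

lemma tangent_space_Flag_linearized:
  assumes "v \<in> tangent_space (Flag ns d) f"
  shows "k \<notin> {1..d} \<Longrightarrow> v k = 0"
    and "k \<in> {1..d} \<Longrightarrow> transpose (v k) = v k"
    and "k \<in> {1..d} \<Longrightarrow> f k ** v k + v k ** f k = 0"
    and "k \<in> {1..d} \<Longrightarrow> l \<in> {1..d} \<Longrightarrow> f k ** v l + v k ** f l = f l ** v k + v l ** f k"
proof -
  obtain \<gamma> e where e: "e > 0" and \<gamma>0: "\<gamma> 0 = f" and \<gamma>: "\<forall>t. \<bar>t\<bar> < e \<longrightarrow> \<gamma> t \<in> Flag ns d"
    and \<gamma>': "\<And>k. ((\<lambda>t. \<gamma> t k) has_vector_derivative v k) (at 0)"
    using assms unfolding tangent_space_def by blast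
  note vanish = has_vector_derivative_locally_constant[OF _ e]
  show "v k = 0" if "k \<notin> {1..d}"
    using vanish[OF \<gamma>'] \<gamma> Flag_outside that by blast
  show "transpose (v k) = v k" if k: "k \<in> {1..d}"
  proof -
    have "\<forall>t. \<bar>t\<bar> < e \<longrightarrow> transpose (\<gamma> t k) - \<gamma> t k = 0"
      using \<gamma> Flag_relations(1)[OF _ k k] by auto
    moreover have "((\<lambda>t. transpose (\<gamma> t k) - \<gamma> t k) has_vector_derivative transpose (v k) - v k) (at 0)"
      by (intro has_vector_derivative_diff has_vector_derivative_transpose \<gamma>')
    ultimately have "transpose (v k) - v k = 0"
      using vanish by blast
    then show ?thesis by simp
  qed
  show "f k ** v k + v k ** f k = 0" if k: "k \<in> {1..d}"
  proof -
    have "\<forall>t. \<bar>t\<bar> < e \<longrightarrow> \<gamma> t k ** \<gamma> t k = mat 1"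
      using \<gamma> Flag_relations(2)[OF _ k k] by auto
    then show ?thesis
      using vanish[OF has_vector_derivative_matrix_mult[OF \<gamma>' \<gamma>']] \<gamma>0 by blast
  qed
  show "f k ** v l + v k ** f l = f l ** v k + v l ** f k" if k: "k \<in> {1..d}" and l: "l \<in> {1..d}"
  proof -
    have "\<forall>t. \<bar>t\<bar> < e \<longrightarrow> \<gamma> t k ** \<gamma> t l - \<gamma> t l ** \<gamma> t k = 0"
      using \<gamma> Flag_relations(3)[OF _ k l] by auto
    then have "(f k ** v l + v k ** f l) - (f l ** v k + v l ** f k) = 0"
      using vanish[OF has_vector_derivative_diff[OF
            has_vector_derivative_matrix_mult[OF \<gamma>' \<gamma>'] has_vector_derivative_matrix_mult[OF \<gamma>' \<gamma>']]]
        \<gamma>0 by blast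
    then show ?thesis by simp
  qed
qed

lemma Jmat_anticommutator_eq_0_nth:
  assumes "Jmat ns k ** X + X ** Jmat ns k = 0" "blk ns i = k \<longleftrightarrow> blk ns j = k"
  shows "X $ i $ j = 0"
proof -
  have "(Jmat ns k ** X + X ** Jmat ns k) $ i $ j = 0"
    using assms(1) by simp
  then show ?thesis
    using assms(2) by (simp add: Jmat_mult_nth mult_Jmat_nth Jsign_def split: if_splits)
qed

lemma Jmat_commutation_relation_nth:
  assumes "Jmat ns k ** Y + X ** Jmat ns l = Jmat ns l ** X + Y ** Jmat ns k"
    and "l \<noteq> k" "blk ns i = k" "blk ns j = l"
  shows "X $ i $ j = - Y $ i $ j"
proof -
  have "(Jmat ns k ** Y + X ** Jmat ns l) $ i $ j = (Jmat ns l ** X + Y ** Jmat ns k) $ i $ j"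
    using assms(1) by simp
  then show ?thesis
    using assms(2-4) by (simp add: Jmat_mult_nth mult_Jmat_nth Jsign_def)
qed

lemma tangent_space_Flag_subset_blocks:
  fixes V :: "real^('n::{finite,linorder})^('n::{finite,linorder})"
  assumes V: "orthogonal_matrix V"
    and f: "\<forall>k\<in>{1..d}. f k = V ** Jmat ns k ** transpose V"
  shows "tangent_space (Flag ns d) f \<subseteq> flag_tangent_blocks ns d V"
proof
  fix v assume v: "v \<in> tangent_space (Flag ns d) f"
  define X where "X k = transpose V ** v k ** V" for k
  have v_X: "v k = V ** X k ** transpose V" for k
    unfolding X_def using orthogonal_conj_cancel(2)[OF V] by simp
  have conj_add: "V ** (P + Q) ** transpose V = V ** P ** transpose V + V ** Q ** transpose V" for P Q
    by (simp add: matrix_add_ldistrib matrix_add_rdistrib)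
  have X_sym: "transpose (X k) = X k" if "k \<in> {1..d}" for k
    using tangent_space_Flag_linearized(2)[OF v that]
    by (simp add: X_def matrix_transpose_mul matrix_mul_assoc)
  have X_anti: "Jmat ns k ** X k + X k ** Jmat ns k = 0" if k: "k \<in> {1..d}" for k
  proof -
    have "V ** (Jmat ns k ** X k + X k ** Jmat ns k) ** transpose V = V ** 0 ** transpose V"
      using tangent_space_Flag_linearized(3)[OF v k] f k
      by (simp add: conj_add orthogonal_conj_mult[OF V] v_X)
    then show ?thesis
      unfolding orthogonal_conj_eq_iff[OF V] .
  qed
  have X_comm: "Jmat ns k ** X l + X k ** Jmat ns l = Jmat ns l ** X k + X l ** Jmat ns k"
    if k: "k \<in> {1..d}" and l: "l \<in> {1..d}" for k l
  proof -
    have "V ** (Jmat ns k ** X l + X k ** Jmat ns l) ** transpose V =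
        V ** (Jmat ns l ** X k + X l ** Jmat ns k) ** transpose V"
      using tangent_space_Flag_linearized(4)[OF v k l] f k l
      by (simp add: conj_add orthogonal_conj_mult[OF V] v_X)
    then show ?thesis
      unfolding orthogonal_conj_eq_iff[OF V] .
  qed
  show "v \<in> flag_tangent_blocks ns d V"
    unfolding flag_tangent_blocks_def
  proof (intro CollectI exI[of _ X] conjI ballI allI impI)
    fix k l and i j :: 'n
    assume "k \<in> {1..d}" "l \<in> {1..d}" "l \<noteq> k" "blk ns i = k \<and> blk ns j = l"
    then show "X k $ i $ j = - X l $ i $ j"
      using X_comm Jmat_commutation_relation_nth by blast
  next
    fix k and i j :: 'n
    assume "k \<in> {1..d}" "blk ns i \<noteq> k \<and> blk ns j \<noteq> k"
    then show "X k $ i $ j = 0"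
      by (intro Jmat_anticommutator_eq_0_nth[OF X_anti]) auto
  next
    fix k and i j :: 'n
    assume "k \<in> {1..d}" "blk ns i = k \<and> blk ns j = k"
    then show "X k $ i $ j = 0"
      by (intro Jmat_anticommutator_eq_0_nth[OF X_anti]) auto
  qed (use X_sym v_X tangent_space_Flag_linearized(1)[OF v] in auto)
qed

(* The (i,j) entry of A J_k - J_k A is 2 A(i,j) if j lies in block k and i does not, and
   -2 A(i,j) in the reverse situation.  So A(i,j) is read off X at the block of j, or at the
   block of i when j lies in the last block d + 1; the readings agree by X_k(i,j) = - X_l(i,j). *)
definition block_generator ::
  "(nat \<Rightarrow> nat) \<Rightarrow> nat \<Rightarrow> (nat \<Rightarrow> real^('n::{finite,linorder})^('n::{finite,linorder})) \<Rightarrow>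
     real^('n::{finite,linorder})^('n::{finite,linorder})"
  where "block_generator ns d X = (\<chi> i j.
    if blk ns i = blk ns j then 0
    else if blk ns j \<in> {1..d} then X (blk ns j) $ i $ j / 2
    else - X (blk ns i) $ i $ j / 2)"

lemma transpose_block_generator:
  fixes X :: "nat \<Rightarrow> real^('n::{finite,linorder})^('n::{finite,linorder})"
  assumes ns: "ns 0 = 0" "ns (d + 1) = CARD('n::{finite,linorder})"
    and sym: "\<forall>k\<in>{1..d}. transpose (X k) = X k"
    and off: "\<forall>k\<in>{1..d}. \<forall>l\<in>{1..d}. l \<noteq> k \<longrightarrow>
              (\<forall>i j. blk ns i = k \<and> blk ns j = l \<longrightarrow> X k $ i $ j = - (X l $ i $ j))"
  shows "transpose (block_generator ns d X) = - block_generator ns d X"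
proof -
  have X_sym: "X k $ j $ i = X k $ i $ j" if "k \<in> {1..d}" for k i j
    using arg_cong[OF sym[rule_format, OF that], of "\<lambda>M. M $ i $ j"] by (simp add: transpose_def)
  have skew: "block_generator ns d X $ j $ i = - block_generator ns d X $ i $ j" for i j
  proof (cases "blk ns i = blk ns j")
    case False
    moreover have "blk ns i \<in> {1..d} \<or> blk ns j \<in> {1..d}"
      using False blk_bounds[OF ns, of i] blk_bounds[OF ns, of j] by auto
    ultimately show ?thesis
      using off[rule_format, of "blk ns i" "blk ns j" i j] X_sym[of "blk ns i" i j] X_sym[of "blk ns j" i j]
      by (auto simp: block_generator_def)
  qed (simp add: block_generator_def)
  have "transpose (block_generator ns d X) $ i $ j = (- block_generator ns d X) $ i $ j" for i j
    using skew[of j i] by (simp add: transpose_def)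
  then show ?thesis
    by (simp add: vec_eq_iff)
qed

lemma block_generator_commutator:
  assumes k: "k \<in> {1..d}"
    and off: "\<forall>l\<in>{1..d}. l \<noteq> k \<longrightarrow>
              (\<forall>i j. blk ns i = k \<and> blk ns j = l \<longrightarrow> X k $ i $ j = - (X l $ i $ j))"
    and outside: "\<forall>i j. blk ns i \<noteq> k \<and> blk ns j \<noteq> k \<longrightarrow> X k $ i $ j = 0"
    and inside: "\<forall>i j. blk ns i = k \<and> blk ns j = k \<longrightarrow> X k $ i $ j = 0"
  shows "X k = block_generator ns d X ** Jmat ns k - Jmat ns k ** block_generator ns d X"
proof -
  have "X k $ i $ j = block_generator ns d X $ i $ j * (Jsign ns k j - Jsign ns k i)" for i j
  proof (cases "blk ns i = k")
    case i: True
    show ?thesis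
    proof (cases "blk ns j = k")
      case True
      then show ?thesis
        using i inside by (simp add: block_generator_def)
    next
      case False
      then show ?thesis
        using i k off[rule_format, of "blk ns j" i j]
        by (cases "blk ns j \<in> {1..d}") (auto simp: block_generator_def Jsign_def)
    qed
  next
    case False
    then show ?thesis
      using k outside[rule_format, of i j]
      by (cases "blk ns j = k") (auto simp: block_generator_def Jsign_def)
  qed
  then show ?thesis
    by (simp add: vec_eq_iff Jmat_mult_nth mult_Jmat_nth algebra_simps)
qed

lemma flag_tangent_blocks_subset_commutators:
  fixes V :: "real^('n::{finite,linorder})^('n::{finite,linorder})"
  assumes "ns 0 = 0" "ns (d + 1) = CARD('n::{finite,linorder})"
  shows "flag_tangent_blocks ns d V \<subseteq> flag_tangent_commutators ns d V"
proof
  fix F assume "F \<in> flag_tangent_blocks ns d V"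
  then obtain X where X: "\<forall>k\<in>{1..d}. transpose (X k) = X k \<and> F k = V ** X k ** transpose V"
    and off: "\<forall>k\<in>{1..d}. \<forall>l\<in>{1..d}. l \<noteq> k \<longrightarrow>
              (\<forall>i j. blk ns i = k \<and> blk ns j = l \<longrightarrow> X k $ i $ j = - (X l $ i $ j))"
    and outside: "\<forall>k\<in>{1..d}. \<forall>i j. blk ns i \<noteq> k \<and> blk ns j \<noteq> k \<longrightarrow> X k $ i $ j = 0"
    and inside: "\<forall>k\<in>{1..d}. \<forall>i j. blk ns i = k \<and> blk ns j = k \<longrightarrow> X k $ i $ j = 0"
    and F0: "\<forall>k. k \<notin> {1..d} \<longrightarrow> F k = 0"
    unfolding flag_tangent_blocks_def mem_Collect_eq by (elim exE conjE) (rule that)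
  show "F \<in> flag_tangent_commutators ns d V"
    unfolding flag_tangent_commutators_def
  proof (intro CollectI exI[of _ "block_generator ns d X"] conjI allI ballI impI)
    show "transpose (block_generator ns d X) = - block_generator ns d X"
      using X by (intro transpose_block_generator assms off) auto
    show "block_generator ns d X $ i $ j = 0" if "blk ns i = blk ns j" for i j
      using that by (simp add: block_generator_def)
    show "F k = V ** (block_generator ns d X ** Jmat ns k - Jmat ns k ** block_generator ns d X) **
        transpose V" if k: "k \<in> {1..d}" for k
      using block_generator_commutator[OF k bspec[OF off k] bspec[OF outside k] bspec[OF inside k]]
        bspec[OF X k] by simp
  qed (use F0 in blast)
qed

theorem proposition3p2:
  fixes ns :: "nat \<Rightarrow> nat" and d :: nat and V :: "real^('n::{finite,linorder})^('n::{finite,linorder})"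
    and f :: "nat \<Rightarrow> real^('n::{finite,linorder})^('n::{finite,linorder})"
  assumes "d \<ge> 1"
    and "ns 0 = 0" and "ns (d + 1) = CARD('n::{finite,linorder})"
    and "\<forall>k\<le>d. ns k < ns (Suc k)"
    and "orthogonal_matrix V"
    and "\<forall>k\<in>{1..d}. f k = V ** Jmat ns k ** transpose V"
    and "\<forall>k. k \<notin> {1..d} \<longrightarrow> f k = 0"
  shows "tangent_space (Flag ns d) f =
      {F. \<exists>A::real^('n::{finite,linorder})^('n::{finite,linorder}). transpose A = - A \<and>
          (\<forall>i j. blk ns i = blk ns j \<longrightarrow> A $ i $ j = 0) \<and>
          (\<forall>k\<in>{1..d}. F k = V ** (A ** Jmat ns k - Jmat ns k ** A) ** transpose V) \<and>
          (\<forall>k. k \<notin> {1..d} \<longrightarrow> F k = 0)}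
    \<and> tangent_space (Flag ns d) f =
      {F. \<exists>X::nat \<Rightarrow> real^('n::{finite,linorder})^('n::{finite,linorder}).
          (\<forall>k\<in>{1..d}. transpose (X k) = X k \<and> F k = V ** X k ** transpose V) \<and>
          (\<forall>k\<in>{1..d}. \<forall>l\<in>{1..d}. l \<noteq> k \<longrightarrow>
              (\<forall>i j. blk ns i = k \<and> blk ns j = l \<longrightarrow> X k $ i $ j = - (X l $ i $ j))) \<and>
          (\<forall>k\<in>{1..d}. \<forall>i j. blk ns i \<noteq> k \<and> blk ns j \<noteq> k \<longrightarrow> X k $ i $ j = 0) \<and>
          (\<forall>k\<in>{1..d}. \<forall>i j. blk ns i = k \<and> blk ns j = k \<longrightarrow> X k $ i $ j = 0) \<and>
          (\<forall>k. k \<notin> {1..d} \<longrightarrow> F k = 0)}"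
proof -
  have "tangent_space (Flag ns d) f \<subseteq> flag_tangent_blocks ns d V"
    using assms(5,6) by (rule tangent_space_Flag_subset_blocks)
  moreover have "flag_tangent_blocks ns d V \<subseteq> flag_tangent_commutators ns d V"
    using assms(2,3) by (rule flag_tangent_blocks_subset_commutators)
  moreover have "flag_tangent_commutators ns d V \<subseteq> tangent_space (Flag ns d) f"
    using assms(5-7) by (rule flag_tangent_commutators_subset_tangent_space)
  ultimately show ?thesis
    unfolding flag_tangent_commutators_def[symmetric] flag_tangent_blocks_def[symmetric]
    by blast
qed

end
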